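(* For every $N\in\mathbb{N}^*$, \[ R(N)=-2\sum_{k=1}^N\ \sum_{\substack{1\le i\le A(k)-1\\ \rho_i(k)-\rho_{i-1}(k)\ge 1/N>\rho_{i+1}(k)-\rho_i(k)}} B_1\big(N\rho_i(k)\big). \]
   Context: For $E\subset\mathbb{R}$, $q(E)=\min\{q\in\mathbb{N}^*:\exists p\in\mathbb{Z},\ p/q\in E\}$ ($=\infty$ if $E\cap\mathbb{Q}=\emptyset$). For $t\in\mathbb{R}$ and $\delta>0$, $q(t,\delta)=q(]t-\delta,t])$. $S(N)=\sum_{j=1}^N q\big(](j-1)/N,j/N]\big)$ and $R(N)=S(N)-N\int_0^1 q(t,1/N)\,dt$. For $k\in\mathbb{N}^*$, $A(k)=\sum_{n\le k}\varphi(n)$ ($\varphi$ Euler's totient), and $0=\rho_0(k)<\rho_1(k)<\dots<\rho_{A(k)}(k)=1$ are the elements of $[0,1]$ that are rational numbers $p/q$ in lowest terms with $1\le q\le k$ (the Farey fractions of order $k$ in $[0,1]$). $B_1(x)=0$ if $x\in\mathbb{Z}$ and $B_1(x)=\{x\}-1/2$ otherwise. *)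

theory Defs
  imports "HOL-Analysis.Analysis" "HOL-Number_Theory.Number_Theory" "HOL-Library.Extended_Nat"
begin

definition qset :: "real set \<Rightarrow> enat" where
  "qset E = (if \<exists>q::nat. q > 0 \<and> (\<exists>p::int. real_of_int p / real q \<in> E)
             then enat (LEAST q::nat. q > 0 \<and> (\<exists>p::int. real_of_int p / real q \<in> E))
             else \<infinity>)"

definition qpt :: "real \<Rightarrow> real \<Rightarrow> enat" where
  "qpt t \<delta> = qset {t - \<delta> <.. t}"

definition S :: "nat \<Rightarrow> real" where
  "S N = (\<Sum>j=1..N. real (the_enat (qset {real (j - 1) / real N <.. real j / real N})))"

definition R :: "nat \<Rightarrow> real" where
  "R N = S N - real N * integral {0..1} (\<lambda>t. real (the_enat (qpt t (1 / real N))))"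

definition A :: "nat \<Rightarrow> nat" where
  "A k = (\<Sum>n=1..k. totient n)"

definition farey :: "nat \<Rightarrow> real set" where
  "farey k = {x. 0 \<le> x \<and> x \<le> 1 \<and> (\<exists>p::int. \<exists>q::nat. 1 \<le> q \<and> q \<le> k \<and> x = real_of_int p / real q)}"

definition rho :: "nat \<Rightarrow> nat \<Rightarrow> real" where
  "rho i k = sorted_list_of_set (farey k) ! i"

definition B1 :: "real \<Rightarrow> real" where
  "B1 x = (if x \<in> \<int> then 0 else frac x - 1/2)"

end

theory Submission
  imports Defs
begin

(* For t in [0,1], q(t,1/N) - 1 counts the orders k <= N for which the window ]t-1/N,t]
   contains no Farey fraction of order k, and for fixed k this happens exactly when t lies
   in one of the intervals [rho_(i-1) + 1/N, rho_i).  Since the Riemann-sum discrepancy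
   sum_j f(j/N) - N * int_0^1 f is linear, R(N) is the sum of the discrepancies of these
   intervals, and the discrepancy of [a + 1/N, b) is {-Nb} - {-Na} whenever b - a >= 1/N.
   The symmetry rho_(A-i) = 1 - rho_i turns the left endpoints {-N rho_(i-1)} into {N rho_i},
   and {-x} - {x} = -2 B1(x); the terms at points lying between two long gaps cancel in
   pairs under the same symmetry, leaving the points where a long gap is followed by a
   short one. *)

section \<open>Riemann-sum discrepancy\<close>

definition discrepancy :: "nat \<Rightarrow> (real \<Rightarrow> real) \<Rightarrow> real" where
  "discrepancy N f = (\<Sum>j=1..N. f (real j / real N)) - real N * integral {0..1} f"

lemma discrepancy_cong:
  assumes "\<And>t. t \<in> {0..1} \<Longrightarrow> f t = g t"
  shows "discrepancy N f = discrepancy N g"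
proof -
  have "f (real j / real N) = g (real j / real N)" if "j \<in> {1..N}" for j
    using that assms by auto
  moreover have "integral {0..1} f = integral {0..1} g"
    using assms by (rule integral_cong)
  ultimately show ?thesis
    unfolding discrepancy_def by simp
qed

lemma discrepancy_add_const:
  assumes "f integrable_on {0..1}"
  shows "discrepancy N (\<lambda>t. c + f t) = discrepancy N f"
  using assms by (simp add: discrepancy_def integral_add[OF integrable_const_ivl] sum.distrib algebra_simps)

lemma discrepancy_sum:
  assumes "finite I" "\<And>i. i \<in> I \<Longrightarrow> f i integrable_on {0..1}"
  shows "discrepancy N (\<lambda>t. \<Sum>i\<in>I. f i t) = (\<Sum>i\<in>I. discrepancy N (f i))"
proof -
  have "(\<Sum>j=1..N. \<Sum>i\<in>I. f i (real j / real N)) = (\<Sum>i\<in>I. \<Sum>j=1..N. f i (real j / real N))"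
    by (rule sum.swap)
  then show ?thesis
    using assms by (simp add: discrepancy_def integral_sum sum_subtractf sum_distrib_left)
qed

lemma lmeasurable_Ico: "{u..<b :: real} \<in> lmeasurable"
  by (simp add: bounded_set_imp_lmeasurable)

lemma indicator_Ico_integrable: "(indicator {u..<b} :: real \<Rightarrow> real) integrable_on {0..1}"
  by (simp add: integrable_on_indicator fmeasurable_Int_fmeasurable lmeasurable_Ico)

lemma integral_indicator_Ico:
  fixes u b :: real
  assumes "0 \<le> u" "u \<le> b" "b \<le> 1"
  shows "integral {0..1} (indicator {u..<b}) = b - u"
proof -
  have "{u..<b} \<inter> {0..1} = {u..<b}" using assms by auto
  then show ?thesis using assms
    by (simp add: integral_indicator lmeasurable_Ico measure_def)
qed

lemma ceiling_minus_self: "of_int \<lceil>x\<rceil> - x = frac (- x)"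
  by (simp add: frac_def ceiling_def)

lemma card_integers_between:
  fixes u v :: real
  assumes "0 \<le> u" "u + 1 \<le> v" "v \<le> real N"
  shows "real (card {j\<in>{1..N}. u + 1 \<le> real j \<and> real j < v}) = of_int \<lceil>v\<rceil> - of_int \<lceil>u\<rceil> - 1"
proof -
  define a b where "a = nat \<lceil>u\<rceil>" and "b = nat \<lceil>v\<rceil>"
  have a: "int a = \<lceil>u\<rceil>" and b: "int b = \<lceil>v\<rceil>"
    using assms unfolding a_def b_def by auto
  have lower: "u + 1 \<le> real j \<longleftrightarrow> a + 1 \<le> j" for j
  proof -
    have "u + 1 \<le> real j \<longleftrightarrow> \<lceil>u\<rceil> \<le> int j - 1"
      unfolding ceiling_le_iff by auto
    then show ?thesis using a by linarith
  qed
  have upper: "real j < v \<longleftrightarrow> j < b" for j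
  proof -
    have "real j < v \<longleftrightarrow> int j < \<lceil>v\<rceil>"
      unfolding less_ceiling_iff by simp
    then show ?thesis using b by linarith
  qed
  have "b \<le> N" using assms(3) b by linarith
  then have "{j\<in>{1..N}. u + 1 \<le> real j \<and> real j < v} = {a + 1..<b}"
    by (auto simp: lower upper)
  moreover have "a + 1 \<le> b"
    using a b ceiling_mono[of "u + 1" v] assms(2) by linarith
  ultimately show ?thesis using a b by simp
qed

lemma discrepancy_indicator_gap:
  fixes a b :: real
  assumes N: "N \<ge> 1" and "0 \<le> a" "b \<le> 1"
  shows "discrepancy N (indicator {a + 1 / real N..<b}) =
    (if b - a \<ge> 1 / real N then frac (- (real N * b)) - frac (- (real N * a)) else 0)"
proof (cases "b - a \<ge> 1 / real N")
  case False
  then have "indicator {a + 1 / real N..<b} = (\<lambda>t::real. 0::real)"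
    by (auto simp: fun_eq_iff)
  then show ?thesis using False by (simp add: discrepancy_def)
next
  case True
  have Npos: "real N > 0" using N by simp
  have gap: "real N * a + 1 \<le> real N * b"
    using True Npos by (simp add: field_simps)
  have "indicator {a + 1 / real N..<b} (real j / real N) =
      (if real N * a + 1 \<le> real j \<and> real j < real N * b then 1 else 0 :: real)" for j
  proof -
    have "(a + 1 / real N) * real N = real N * a + 1"
      using Npos by (simp add: algebra_simps)
    then have "a + 1 / real N \<le> real j / real N \<longleftrightarrow> real N * a + 1 \<le> real j"
      using Npos by (simp only: pos_le_divide_eq)
    moreover have "real j / real N < b \<longleftrightarrow> real j < real N * b"
      using Npos by (simp add: divide_less_eq mult.commute)
    ultimately show ?thesis by (simp add: indicator_def)
  qed
  then have samples: "(\<Sum>j=1..N. indicator {a + 1 / real N..<b} (real j / real N)) =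
      real (card {j\<in>{1..N}. real N * a + 1 \<le> real j \<and> real j < real N * b})"
    by (simp add: sum.If_cases Int_def conj_assoc)
  have count: "real (card {j\<in>{1..N}. real N * a + 1 \<le> real j \<and> real j < real N * b}) =
      of_int \<lceil>real N * b\<rceil> - of_int \<lceil>real N * a\<rceil> - 1"
    using assms gap by (intro card_integers_between) auto
  have "real N * integral {0..1} (indicator {a + 1 / real N..<b}) = real N * b - real N * a - 1"
    using assms True Npos by (simp add: integral_indicator_Ico field_simps)
  then show ?thesis
    using True unfolding discrepancy_def samples count by (simp flip: ceiling_minus_self)
qed

section \<open>Gap sums of a reflection-symmetric sequence\<close>

lemma frac_neg_minus_frac: "frac (- x) - frac x = - 2 * B1 x"
  by (cases "x \<in> \<int>") (simp_all add: B1_def frac_neg)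

lemma B1_int_minus:
  assumes "n \<in> \<int>"
  shows "B1 (n - x) = - B1 x"
proof (cases "x \<in> \<int>")
  case True
  then show ?thesis using assms by (simp add: B1_def)
next
  case False
  then have "n - x \<notin> \<int>" using assms Ints_diff[of n "n - x"] by auto
  moreover have "frac (n - x) = 1 - frac x"
    using assms False frac_add_int_left[of n "- x"] by (simp add: frac_neg)
  ultimately show ?thesis using False by (simp add: B1_def)
qed

context
  fixes r :: "nat \<Rightarrow> real" and M :: nat
  assumes reflect: "\<And>i. i \<le> M \<Longrightarrow> r (M - i) = 1 - r i"
begin

lemma gap_reflect:
  assumes "1 \<le> i" "i \<le> M"
  shows "r (M + 1 - i) - r (M + 1 - i - 1) = r i - r (i - 1)"
proof -
  have "M + 1 - i = M - (i - 1)" "M + 1 - i - 1 = M - i"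
    using assms by auto
  then show ?thesis
    using reflect[of "i - 1"] reflect[of i] assms by simp
qed

lemma sum_frac_neg_left_endpoints:
  "(\<Sum>i=1..M. if r i - r (i - 1) \<ge> d then frac (- (real N * r (i - 1))) else 0) =
   (\<Sum>i=1..M. if r i - r (i - 1) \<ge> d then frac (real N * r i) else 0)"
proof -
  define f where "f i = (if r i - r (i - 1) \<ge> d then frac (- (real N * r (i - 1))) else 0)" for i
  have "f (M + 1 - i) = (if r i - r (i - 1) \<ge> d then frac (real N * r i) else 0)"
    if "i \<in> {1..M}" for i
  proof -
    have endpoint: "r (M + 1 - i - 1) = 1 - r i"
      using reflect[of i] that by simp
    have "- (real N * r (M + 1 - i - 1)) = real N * r i + of_int (- int N)"
      unfolding endpoint by (simp add: algebra_simps)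
    then have "frac (- (real N * r (M + 1 - i - 1))) = frac (real N * r i)"
      by (simp only: frac_add_of_int_right)
    then show ?thesis
      using gap_reflect[of i] that unfolding f_def by simp
  qed
  then show ?thesis
    unfolding f_def[symmetric] by (subst sum.atLeastAtMost_rev) (rule sum.cong, simp_all)
qed

lemma sum_B1_between_long_gaps:
  "(\<Sum>i=1..M - 1. if r i - r (i - 1) \<ge> d \<and> r (i + 1) - r i \<ge> d then B1 (real N * r i) else 0) = 0"
proof -
  define f where
    "f i = (if r i - r (i - 1) \<ge> d \<and> r (i + 1) - r i \<ge> d then B1 (real N * r i) else 0)" for i
  have f_reflect: "f (M - i) = - f i" if "i \<in> {1..M - 1}" for i
  proof -
    have i: "i + 1 \<le> M" "1 \<le> i" using that by auto
    then have "r (M - i) - r (M - i - 1) = r (i + 1) - r i"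
      using gap_reflect[of "i + 1"] by simp
    moreover have "r (M - i + 1) - r (M - i) = r i - r (i - 1)"
      using gap_reflect[of i] i by (simp add: Suc_diff_le)
    moreover have "B1 (real N * r (M - i)) = - B1 (real N * r i)"
      using reflect[of i] B1_int_minus[of "real N" "real N * r i"] i
      by (simp add: right_diff_distrib)
    ultimately show ?thesis unfolding f_def by simp
  qed
  have "(\<Sum>i=1..M - 1. f i) = (\<Sum>i=1..M - 1. f (M - i))"
    by (rule sum.reindex_bij_witness[where i="\<lambda>i. M - i" and j="\<lambda>i. M - i"]) auto
  also have "\<dots> = - (\<Sum>i=1..M - 1. f i)"
    by (simp add: f_reflect sum_negf)
  finally show ?thesis unfolding f_def by simp
qed

lemma sum_frac_gap_differences:
  assumes "r M = 1"
  shows "(\<Sum>i=1..M. if r i - r (i - 1) \<ge> d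
            then frac (- (real N * r i)) - frac (- (real N * r (i - 1))) else 0) =
    - 2 * (\<Sum>i\<in>{i\<in>{1..M - 1}. r i - r (i - 1) \<ge> d \<and> d > r (i + 1) - r i}. B1 (real N * r i))"
proof -
  define g where "g i = r i - r (i - 1)" for i
  have split: "(if P then x - y else 0) = (if P then x else 0) - (if P then y else (0::real))"
    for P x y by simp
  have "(\<Sum>i=1..M. if g i \<ge> d then frac (- (real N * r i)) - frac (- (real N * r (i - 1))) else 0) =
      (\<Sum>i=1..M. if g i \<ge> d then frac (- (real N * r i)) else 0) -
      (\<Sum>i=1..M. if g i \<ge> d then frac (- (real N * r (i - 1))) else 0)"
    by (simp only: split sum_subtractf)
  also have "\<dots> = (\<Sum>i=1..M. if g i \<ge> d then frac (- (real N * r i)) else 0) -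
      (\<Sum>i=1..M. if g i \<ge> d then frac (real N * r i) else 0)"
    using sum_frac_neg_left_endpoints[of d N] by (simp only: g_def)
  also have "\<dots> = (\<Sum>i=1..M. if g i \<ge> d then frac (- (real N * r i)) - frac (real N * r i) else 0)"
    by (simp only: split sum_subtractf)
  also have "\<dots> = - 2 * (\<Sum>i=1..M. if g i \<ge> d then B1 (real N * r i) else 0)"
    by (simp add: frac_neg_minus_frac sum_distrib_left if_distrib cong: if_cong)
  also have "(\<Sum>i=1..M. if g i \<ge> d then B1 (real N * r i) else 0) =
      (\<Sum>i=1..M - 1. if g i \<ge> d then B1 (real N * r i) else 0)"
  proof (cases M)
    case (Suc m)
    have "B1 (real N * r M) = 0" using assms by (simp add: B1_def)
    then show ?thesis using Suc by simp
  qed simp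
  also have "\<dots> = (\<Sum>i=1..M - 1. (if g i \<ge> d \<and> d > g (i + 1) then B1 (real N * r i) else 0)
      + (if g i \<ge> d \<and> g (i + 1) \<ge> d then B1 (real N * r i) else 0))"
    by (intro sum.cong) auto
  also have "\<dots> = (\<Sum>i=1..M - 1. if g i \<ge> d \<and> d > g (i + 1) then B1 (real N * r i) else 0)"
    using sum_B1_between_long_gaps[of d N] by (simp add: g_def sum.distrib)
  also have "\<dots> = (\<Sum>i\<in>{i\<in>{1..M - 1}. g i \<ge> d \<and> d > g (i + 1)}. B1 (real N * r i))"
    by (rule sum.inter_filter[symmetric]) simp
  finally show ?thesis by (simp add: g_def)
qed

end

section \<open>Farey fractions\<close>

lemma finite_farey: "finite (farey k)"
proof -
  have "farey k \<subseteq> (\<lambda>(p, q). real_of_int p / real q) ` ({0..int k} \<times> {1..k})"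
  proof
    fix x assume "x \<in> farey k"
    then obtain p :: int and q :: nat
      where pq: "1 \<le> q" "q \<le> k" "x = of_int p / real q" "0 \<le> x" "x \<le> 1"
      unfolding farey_def by auto
    then have "0 \<le> p" "p \<le> int q"
      by (auto simp: zero_le_divide_iff divide_le_eq_1)
    with pq show "x \<in> (\<lambda>(p, q). real_of_int p / real q) ` ({0..int k} \<times> {1..k})"
      by force
  qed
  then show ?thesis by (rule finite_subset) simp
qed

lemma zero_in_farey: "k \<ge> 1 \<Longrightarrow> 0 \<in> farey k"
  unfolding farey_def by (auto intro!: exI[of _ "0::int"] exI[of _ "1::nat"])

lemma one_in_farey: "k \<ge> 1 \<Longrightarrow> 1 \<in> farey k"
  unfolding farey_def by (auto intro!: exI[of _ "1::int"] exI[of _ "1::nat"])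

lemma farey_subset_unit_interval: "farey k \<subseteq> {0..1}"
  unfolding farey_def by auto

lemma one_minus_in_farey:
  assumes "x \<in> farey k"
  shows "1 - x \<in> farey k"
proof -
  obtain p :: int and q :: nat
    where pq: "1 \<le> q" "q \<le> k" "x = of_int p / real q" "0 \<le> x" "x \<le> 1"
    using assms unfolding farey_def by auto
  moreover have "1 - x = of_int (int q - p) / real q"
    using pq by (simp add: field_simps)
  moreover have "0 \<le> 1 - x" "1 - x \<le> 1"
    using pq by auto
  ultimately show ?thesis
    unfolding farey_def mem_Collect_eq by blast
qed

lemma coprime_denominator_dvd:
  fixes a c :: int
  assumes "coprime a b" "b > 0" "d > 0"
    and "(of_int a / of_int b :: real) = of_int c / of_int d"
  shows "b dvd d"
proof -
  have "(of_int (a * d) :: real) = of_int (c * b)"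
    using assms(2-4) by (simp add: field_simps)
  then have "b dvd a * d"
    by (simp only: of_int_eq_iff) simp
  with assms(1) show ?thesis
    by (simp add: coprime_dvd_mult_right_iff coprime_commute)
qed

lemma farey_Suc:
  assumes "k \<ge> 1"
  shows "farey (Suc k) = farey k \<union> (\<lambda>p. real p / real (Suc k)) ` totatives (Suc k)"
proof
  show "farey k \<union> (\<lambda>p. real p / real (Suc k)) ` totatives (Suc k) \<subseteq> farey (Suc k)"
  proof -
    have "farey k \<subseteq> farey (Suc k)"
      unfolding farey_def by (auto intro: le_SucI)
    moreover have "real p / real (Suc k) \<in> farey (Suc k)" if "p \<in> totatives (Suc k)" for p
    proof -
      have "p \<le> Suc k" using that by (simp add: in_totatives_iff)
      then show ?thesis
        unfolding farey_def by (auto intro!: exI[of _ "int p"] exI[of _ "Suc k"])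
    qed
    ultimately show ?thesis by auto
  qed
next
  show "farey (Suc k) \<subseteq> farey k \<union> (\<lambda>p. real p / real (Suc k)) ` totatives (Suc k)"
  proof
    fix x assume "x \<in> farey (Suc k)"
    then obtain p :: int and q :: nat
      where pq: "1 \<le> q" "q \<le> Suc k" "x = of_int p / real q" "0 \<le> x" "x \<le> 1"
      unfolding farey_def by auto
    show "x \<in> farey k \<union> (\<lambda>p. real p / real (Suc k)) ` totatives (Suc k)"
    proof (cases "q \<le> k")
      case True
      with pq show ?thesis unfolding farey_def by auto
    next
      case False
      with pq have q: "q = Suc k" by simp
      have "x \<in> \<rat>" using pq by simp
      then obtain a b :: int where ab: "b > 0" "coprime a b" "x = of_int a / of_int b"
        by (rule Rats_cases')
      have "b dvd int q"
        using ab pq by (intro coprime_denominator_dvd[of a b "int q" p]) auto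
      then have "b \<le> int k \<or> b = int q"
        using q zdvd_imp_le[of b "int q"] by (cases "b = int q") (auto dest!: dvd_imp_le_int)
      then show ?thesis
      proof
        assume "b \<le> int k"
        then have "x \<in> farey k"
          using ab pq unfolding farey_def
          by (auto intro!: exI[of _ a] exI[of _ "nat b"])
        then show ?thesis by simp
      next
        assume b: "b = int q"
        have "a \<ge> 0" "a \<le> b"
          using ab pq by (auto simp: zero_le_divide_iff divide_le_eq_1)
        moreover have "a \<noteq> 0"
          using ab b q assms by auto
        ultimately have "nat a \<in> totatives (Suc k)"
          using ab b q by (auto simp: in_totatives_iff coprime_int_iff[symmetric])
        moreover have "x = real (nat a) / real (Suc k)"
          using ab b q \<open>a \<ge> 0\<close> by simp
        ultimately show ?thesis by blast
      qed
    qed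
  qed
qed

lemma farey_disjoint_new_fractions:
  "farey k \<inter> (\<lambda>p. real p / real (Suc k)) ` totatives (Suc k) = {}"
proof (rule ccontr)
  assume "\<not> ?thesis"
  then obtain p a b where p: "p \<in> totatives (Suc k)" and b: "1 \<le> b" "b \<le> k"
    and eq: "real p / real (Suc k) = of_int a / real b"
    unfolding farey_def by auto
  have "coprime p (Suc k)"
    using p by (simp add: in_totatives_iff)
  then have "coprime (int p) (int (Suc k))"
    by (simp only: coprime_int_iff)
  then have "int (Suc k) dvd int b"
    using b eq by (intro coprime_denominator_dvd[of "int p" "int (Suc k)" "int b" a]) auto
  then have "Suc k dvd b"
    by (simp only: int_dvd_int_iff)
  then show False
    using b dvd_imp_le[of "Suc k" b] by simp
qed

lemma card_farey: "k \<ge> 1 \<Longrightarrow> card (farey k) = A k + 1"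
proof (induction k rule: dec_induct)
  case base
  have "farey 1 \<subseteq> {0, 1}"
  proof
    fix x assume "x \<in> farey 1"
    then obtain p :: int where "x = of_int p" "0 \<le> x" "x \<le> 1"
      unfolding farey_def by auto
    then show "x \<in> {0, 1}"
      by (cases "p = 0") auto
  qed
  then have "farey 1 = {0, 1}"
    using zero_in_farey[of 1] one_in_farey[of 1] by auto
  then show ?case by (simp add: A_def)
next
  case (step k)
  have "inj_on (\<lambda>p. real p / real (Suc k)) (totatives (Suc k))"
    by (rule inj_onI) simp
  then have "card ((\<lambda>p. real p / real (Suc k)) ` totatives (Suc k)) = totient (Suc k)"
    by (simp add: card_image totient_def)
  then show ?case
    using step finite_farey farey_disjoint_new_fractions[of k]
    by (simp add: farey_Suc card_Un_disjoint A_def)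
qed

lemma sorted_list_of_set_reflect:
  fixes F :: "'a::linordered_ab_group_add set"
  assumes "finite F" and reflect: "\<And>x. x \<in> F \<Longrightarrow> c - x \<in> F" and i: "i < card F"
  shows "sorted_list_of_set F ! (card F - 1 - i) = c - sorted_list_of_set F ! i"
proof -
  define L where "L = sorted_list_of_set F"
  have "(\<lambda>x. c - x) ` F = F"
    using reflect by (auto intro: image_eqI[of _ _ "c - _"])
  then have "sorted_wrt (<) (map (\<lambda>x. c - x) (rev L)) \<and> set (map (\<lambda>x. c - x) (rev L)) = F
      \<and> length (map (\<lambda>x. c - x) (rev L)) = card F"
    using \<open>finite F\<close> unfolding L_def by (simp add: sorted_wrt_map sorted_wrt_rev)
  then have L_reflect: "L = map (\<lambda>x. c - x) (rev L)"
    unfolding L_def by (rule sorted_list_of_set_unique[OF \<open>finite F\<close>, THEN iffD1])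
  have "c - L ! (card F - 1 - i) = map (\<lambda>x. c - x) (rev L) ! i"
    using i by (simp add: L_def rev_nth)
  also have "\<dots> = L ! i"
    by (simp only: L_reflect[symmetric])
  finally show ?thesis
    unfolding L_def by (simp add: algebra_simps)
qed

lemma length_farey_list: "k \<ge> 1 \<Longrightarrow> length (sorted_list_of_set (farey k)) = A k + 1"
  by (simp add: card_farey)

lemma rho_strict_mono:
  assumes "k \<ge> 1" "i < j" "j \<le> A k"
  shows "rho i k < rho j k"
proof -
  have "sorted_wrt (<) (sorted_list_of_set (farey k))"
    by (simp add: finite_farey)
  then show ?thesis
    using assms length_farey_list[of k] unfolding rho_def sorted_wrt_iff_nth_less by simp
qed

lemma farey_eq_rho_image:
  assumes "k \<ge> 1"
  shows "farey k = (\<lambda>i. rho i k) ` {0..A k}"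
proof -
  have "farey k = set (sorted_list_of_set (farey k))"
    by (simp add: finite_farey)
  also have "\<dots> = (!) (sorted_list_of_set (farey k)) ` {0..<A k + 1}"
    using length_farey_list[OF assms] by (simp add: nth_image)
  also have "{0..<A k + 1} = {0..A k}"
    by auto
  finally show ?thesis
    unfolding rho_def .
qed

lemma rho_in_farey: "k \<ge> 1 \<Longrightarrow> i \<le> A k \<Longrightarrow> rho i k \<in> farey k"
  by (simp add: farey_eq_rho_image)

lemma rho_in_unit_interval: "k \<ge> 1 \<Longrightarrow> i \<le> A k \<Longrightarrow> rho i k \<in> {0..1}"
  using rho_in_farey farey_subset_unit_interval by blast

lemma rho_reflect: "k \<ge> 1 \<Longrightarrow> i \<le> A k \<Longrightarrow> rho (A k - i) k = 1 - rho i k"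
  using sorted_list_of_set_reflect[OF finite_farey one_minus_in_farey, of k i] card_farey[of k]
  unfolding rho_def by simp

lemma rho_first:
  assumes "k \<ge> 1"
  shows "rho 0 k = 0"
proof -
  obtain j where j: "j \<le> A k" "rho j k = 0"
    using farey_eq_rho_image[OF assms] zero_in_farey[OF assms] by auto
  have "rho 0 k \<ge> 0"
    using rho_in_unit_interval[OF assms] by simp
  moreover have "rho 0 k \<le> rho j k"
    using rho_strict_mono[OF assms, of 0 j] j by (cases "j = 0") auto
  ultimately show ?thesis using j by simp
qed

lemma rho_last: "k \<ge> 1 \<Longrightarrow> rho (A k) k = 1"
  using rho_reflect[of k 0] rho_first[of k] by simp

section \<open>Denominators in a window\<close>

lemma window_indicator_eq_sum_gap_indicators:
  fixes r :: "nat \<Rightarrow> real" and d t :: real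
  assumes mono: "\<And>i j. i < j \<Longrightarrow> j \<le> M \<Longrightarrow> r i < r j"
    and t: "r 0 \<le> t" "t \<le> r M" and d: "d > 0"
  shows "(if \<exists>i\<le>M. t - d < r i \<and> r i \<le> t then 0 else 1) =
    (\<Sum>i=1..M. indicator {r (i - 1) + d..<r i} t :: real)"
proof -
  have mono_le: "r i \<le> r j" if "i \<le> j" "j \<le> M" for i j
    using mono[of i j] that by (cases "i = j") auto
  show ?thesis
  proof (cases "t = r M")
    case True
    then have "\<exists>i\<le>M. t - d < r i \<and> r i \<le> t"
      using d by auto
    moreover have "indicator {r (i - 1) + d..<r i} t = (0::real)" if "i \<in> {1..M}" for i
      using mono_le[of i M] that True by (simp add: indicator_def)
    ultimately show ?thesis by simp
  next
    case False
    with t have "t < r M" by simp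
    define i where "i = (LEAST i. t < r i)" \<comment> \<open>\<open>[r (i - 1), r i)\<close> is the gap containing \<open>t\<close>\<close>
    have ti: "t < r i" and iM: "i \<le> M"
      unfolding i_def using \<open>t < r M\<close> by (auto intro: LeastI Least_le)
    have below: "r j \<le> t" if "j < i" for j
      using not_less_Least[of j "\<lambda>i. t < r i"] that unfolding i_def by simp
    have i1: "1 \<le> i"
      using ti t by (cases i) auto
    have others: "indicator {r (j - 1) + d..<r j} t = (0::real)" if "j \<in> {1..M}" "j \<noteq> i" for j
    proof (cases "j < i")
      case True
      then show ?thesis using below[of j] by (simp add: indicator_def)
    next
      case False
      then have "r i \<le> r (j - 1)" using that by (intro mono_le) auto
      then show ?thesis using ti d by (simp add: indicator_def)
    qed
    have "(\<Sum>j=1..M. indicator {r (j - 1) + d..<r j} t :: real) = indicator {r (i - 1) + d..<r i} t"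
      using i1 iM others by (subst sum.remove[of _ i]) (auto intro: sum.neutral)
    also have "\<dots> = (if t - d < r (i - 1) then 0 else 1)"
      using ti by (auto simp: indicator_def)
    also have "(t - d < r (i - 1)) \<longleftrightarrow> (\<exists>j\<le>M. t - d < r j \<and> r j \<le> t)"
    proof
      assume "t - d < r (i - 1)"
      then show "\<exists>j\<le>M. t - d < r j \<and> r j \<le> t"
        using below[of "i - 1"] i1 iM by (intro exI[of _ "i - 1"]) auto
    next
      assume "\<exists>j\<le>M. t - d < r j \<and> r j \<le> t"
      then obtain j where j: "j \<le> M" "t - d < r j" "r j \<le> t" by blast
      then have "j < i" using ti mono_le[of i j] by (cases "j < i") auto
      then have "r j \<le> r (i - 1)" using iM by (intro mono_le) auto
      then show "t - d < r (i - 1)" using j by simp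
    qed
    finally show ?thesis by simp
  qed
qed

lemma qset_le_enat_iff: "qset E \<le> enat k \<longleftrightarrow> (\<exists>q\<in>{1..k}. \<exists>p::int. of_int p / real q \<in> E)"
proof (cases "\<exists>q::nat. q > 0 \<and> (\<exists>p::int. of_int p / real q \<in> E)")
  case True
  let ?P = "\<lambda>q::nat. q > 0 \<and> (\<exists>p::int. of_int p / real q \<in> E)"
  have "(LEAST q. ?P q) \<le> k \<longleftrightarrow> (\<exists>q\<in>{1..k}. \<exists>p::int. of_int p / real q \<in> E)"
  proof
    assume "(LEAST q. ?P q) \<le> k"
    moreover have "?P (LEAST q. ?P q)"
      using True by (rule LeastI_ex)
    ultimately show "\<exists>q\<in>{1..k}. \<exists>p::int. of_int p / real q \<in> E"
      by (intro bexI[of _ "LEAST q. ?P q"]) auto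
  next
    assume "\<exists>q\<in>{1..k}. \<exists>p::int. of_int p / real q \<in> E"
    then obtain q p where q: "q \<in> {1..k}" and "of_int p / real q \<in> E" by blast
    then have "?P q" by auto
    then show "(LEAST q. ?P q) \<le> k"
      using Least_le[of ?P q] q by auto
  qed
  then show ?thesis
    unfolding qset_def if_P[OF True] by simp
next
  case False
  have "\<not> (\<exists>q\<in>{1..k}. \<exists>p::int. of_int p / real q \<in> E)"
  proof
    assume "\<exists>q\<in>{1..k}. \<exists>p::int. of_int p / real q \<in> E"
    then obtain q p where "q \<in> {1..k}" "of_int p / real q \<in> E" by blast
    moreover from \<open>q \<in> {1..k}\<close> have "q > 0" by simp
    ultimately show False using False by blast
  qed
  then show ?thesis
    unfolding qset_def if_not_P[OF False] by simp
qed

lemma qpt_le_enat_iff_farey: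
  assumes t: "t \<in> {0..1}" and k: "k \<ge> 1"
  shows "qpt t \<delta> \<le> enat k \<longleftrightarrow> (\<exists>x\<in>farey k. t - \<delta> < x \<and> x \<le> t)"
proof
  assume "qpt t \<delta> \<le> enat k"
  then obtain q p where q: "q \<in> {1..k}" and p: "of_int p / real q \<in> {t - \<delta><..t}"
    unfolding qpt_def qset_le_enat_iff by blast
  show "\<exists>x\<in>farey k. t - \<delta> < x \<and> x \<le> t"
  proof (cases "of_int p / real q \<ge> (0::real)")
    case True
    moreover have "of_int p / real q \<le> (1::real)"
      using p t by auto
    ultimately have "of_int p / real q \<in> farey k"
      using q unfolding farey_def by auto
    then show ?thesis using p by auto
  next
    case False
    then show ?thesis
      using p t zero_in_farey[OF k] by (intro bexI[of _ 0]) auto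
  qed
next
  assume "\<exists>x\<in>farey k. t - \<delta> < x \<and> x \<le> t"
  then show "qpt t \<delta> \<le> enat k"
    unfolding qpt_def qset_le_enat_iff farey_def by auto
qed

lemma qpt_inverse_le:
  assumes "N \<ge> 1"
  shows "qpt t (1 / real N) \<le> enat N"
proof -
  have N: "real N > 0" using assms by simp
  have "of_int \<lfloor>t * real N\<rfloor> / real N \<in> {t - 1 / real N<..t}"
  proof -
    have "(t - 1 / real N) * real N = t * real N - 1"
      using N by (simp add: algebra_simps)
    moreover have "of_int \<lfloor>t * real N\<rfloor> \<le> t * real N" "t * real N - 1 < of_int \<lfloor>t * real N\<rfloor>"
      by linarith+
    ultimately show ?thesis
      using N by (simp add: pos_divide_le_eq pos_less_divide_eq)
  qed
  then show ?thesis
    unfolding qpt_def qset_le_enat_iff using assms by auto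
qed

text \<open>Hence \<^term>\<open>the_enat\<close> is only ever applied to finite values in \<^term>\<open>S\<close> and \<^term>\<open>R\<close>.\<close>

lemma qpt_inverse_eq_count:
  assumes N: "N \<ge> 1" and t: "t \<in> {0..1}"
  shows "real (the_enat (qpt t (1 / real N))) =
    1 + (\<Sum>k=1..N. if \<exists>x\<in>farey k. t - 1 / real N < x \<and> x \<le> t then 0 else 1)"
proof -
  obtain m where m: "qpt t (1 / real N) = enat m" "m \<le> N"
    using qpt_inverse_le[OF N, of t] by (cases "qpt t (1 / real N)") auto
  have "\<not> qpt t (1 / real N) \<le> enat 0"
    unfolding qpt_def qset_le_enat_iff by simp
  then have m1: "1 \<le> m" using m by simp
  have "(\<exists>x\<in>farey k. t - 1 / real N < x \<and> x \<le> t) \<longleftrightarrow> m \<le> k" if "k \<in> {1..N}" for k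
    using qpt_le_enat_iff_farey[OF t, of k "1 / real N"] m that by simp
  then have "(\<Sum>k=1..N. if \<exists>x\<in>farey k. t - 1 / real N < x \<and> x \<le> t then 0 else 1) =
      (\<Sum>k\<in>{1..N}. if k < m then 1 else (0::real))"
    by (intro sum.cong) (auto simp: not_le)
  also have "\<dots> = real (m - 1)"
  proof -
    have "{k\<in>{1..N}. k < m} = {1..<m}" using m by auto
    then show ?thesis by (simp add: sum.If_cases Int_def conj_commute)
  qed
  finally show ?thesis using m m1 by simp
qed

lemma qpt_inverse_eq_sum_gap_indicators:
  assumes N: "N \<ge> 1" and t: "t \<in> {0..1}"
  shows "real (the_enat (qpt t (1 / real N))) =
    1 + (\<Sum>k=1..N. \<Sum>i=1..A k. indicator {rho (i - 1) k + 1 / real N..<rho i k} t)"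
  unfolding qpt_inverse_eq_count[OF assms]
proof (intro arg_cong[where f="\<lambda>x. 1 + x"] sum.cong refl)
  fix k assume "k \<in> {1..N}"
  then have k: "k \<ge> 1" by simp
  have "(\<exists>x\<in>farey k. t - 1 / real N < x \<and> x \<le> t) \<longleftrightarrow>
      (\<exists>i\<le>A k. t - 1 / real N < rho i k \<and> rho i k \<le> t)"
    unfolding farey_eq_rho_image[OF k] by auto
  also have "(if \<dots> then 0 else 1) =
      (\<Sum>i=1..A k. indicator {rho (i - 1) k + 1 / real N..<rho i k} t :: real)"
    by (rule window_indicator_eq_sum_gap_indicators[where r="\<lambda>i. rho i k"])
      (use t N rho_first[OF k] rho_last[OF k] rho_strict_mono[OF k] in auto)
  finally show "(if \<exists>x\<in>farey k. t - 1 / real N < x \<and> x \<le> t then 0 else 1) =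
      (\<Sum>i=1..A k. indicator {rho (i - 1) k + 1 / real N..<rho i k} t :: real)" .
qed

lemma R_eq_discrepancy:
  assumes "N \<ge> 1"
  shows "R N = discrepancy N (\<lambda>t. real (the_enat (qpt t (1 / real N))))"
proof -
  have "real (j - 1) / real N = real j / real N - 1 / real N" if "j \<in> {1..N}" for j
    using that by (simp add: of_nat_diff diff_divide_distrib)
  then have "S N = (\<Sum>j=1..N. real (the_enat (qpt (real j / real N) (1 / real N))))"
    unfolding S_def qpt_def by simp
  then show ?thesis
    unfolding R_def discrepancy_def by simp
qed

theorem proposition5:
  fixes N :: nat
  assumes "N \<ge> 1"
  shows "R N = - 2 * (\<Sum>k=1..N. \<Sum>i\<in>{i\<in>{1..A k - 1}.
             rho i k - rho (i - 1) k \<ge> 1 / real N \<and> 1 / real N > rho (i + 1) k - rho i k}.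
             B1 (real N * rho i k))"
proof -
  define gap_indicator where
    "gap_indicator k i = (indicator {rho (i - 1) k + 1 / real N..<rho i k} :: real \<Rightarrow> real)" for k i
  have "R N = discrepancy N (\<lambda>t. 1 + (\<Sum>k=1..N. \<Sum>i=1..A k. gap_indicator k i t))"
    unfolding R_eq_discrepancy[OF assms] gap_indicator_def
    by (rule discrepancy_cong) (simp add: qpt_inverse_eq_sum_gap_indicators[OF assms])
  also have "\<dots> = (\<Sum>k=1..N. \<Sum>i=1..A k. discrepancy N (gap_indicator k i))"
    by (simp add: discrepancy_add_const discrepancy_sum integrable_sum
        gap_indicator_def indicator_Ico_integrable)
  also have "\<dots> = (\<Sum>k=1..N. \<Sum>i=1..A k. if rho i k - rho (i - 1) k \<ge> 1 / real N
      then frac (- (real N * rho i k)) - frac (- (real N * rho (i - 1) k)) else 0)"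
    unfolding gap_indicator_def
    by (intro sum.cong refl discrepancy_indicator_gap[OF assms]) (use rho_in_unit_interval in auto)
  also have "\<dots> = (\<Sum>k=1..N. - 2 * (\<Sum>i\<in>{i\<in>{1..A k - 1}.
             rho i k - rho (i - 1) k \<ge> 1 / real N \<and> 1 / real N > rho (i + 1) k - rho i k}.
             B1 (real N * rho i k)))"
    using rho_reflect rho_last
    by (intro sum.cong refl sum_frac_gap_differences[where r="\<lambda>i. rho i k" for k]) auto
  finally show ?thesis
    by (simp add: sum_distrib_left)
qed

end
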